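(* Let $B_J=L+U\in\mathbb R^{n\times n}$ with $L$ strictly lower triangular, $U$ strictly upper triangular, and let $c\in\mathbb R^n$. Let $y^{(0)}\in\mathbb R^n$ and $y^{(k+1)}=(I-U)^{-1}(Ly^{(k)}+c)$ for $k\ge0$ (backward Gauss–Seidel). Consider the FUTC scheme: given $x^{(0)}_1,\dots,x^{(0)}_{n-1}\in\mathbb R^n$ arbitrary and $x^{(0)}_n=y^{(0)}$, for $k\ge0$ and $i=1,\dots,n$, $$x^{(k+1)}_i=\sum_{m=1}^{i-1}U^{(n+1-m)}_c x^{(k+1)}_m+\sum_{m=i}^{n-1}U^{(n+1-m)}_c x^{(k)}_m+Lx^{(k)}_n+c.$$ Then $x^{(k)}_n=y^{(k)}$ for all $k\ge0$, independently of $x^{(0)}_1,\dots,x^{(0)}_{n-1}$.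
   Context: For $j\in\{2,\dots,n\}$, $U^{(j)}_c$ is the $n\times n$ matrix whose $j$-th column agrees with the $j$-th column of $U$ in rows $i\le j-1$ and which is zero elsewhere (the $j$-th column of $U$). Empty sums are zero. *)

theory Defs
  imports "Jordan_Normal_Form.Gauss_Jordan_Elimination"
begin

text \<open>Matrices are 0-indexed in Jordan_Normal_Form.  For the paper's (1-based)
column index j in 2..n, U_c^(j) is the n x n matrix whose j-th column agrees
with the j-th column of U in rows 1..j-1 and is zero elsewhere.\<close>

definition Uc :: "nat \<Rightarrow> real mat \<Rightarrow> nat \<Rightarrow> real mat" where
  "Uc n U j = mat n n (\<lambda>(r, s). if s = j - 1 \<and> r < j - 1 then U $$ (r, s) else 0)"

definition strictly_lower :: "nat \<Rightarrow> real mat \<Rightarrow> bool" where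
  "strictly_lower n L \<longleftrightarrow> (\<forall>r<n. \<forall>s<n. r \<le> s \<longrightarrow> L $$ (r, s) = 0)"

definition strictly_upper :: "nat \<Rightarrow> real mat \<Rightarrow> bool" where
  "strictly_upper n U \<longleftrightarrow> (\<forall>r<n. \<forall>s<n. s \<le> r \<longrightarrow> U $$ (r, s) = 0)"

end

theory Submission
  imports Defs "Jordan_Normal_Form.Determinant"
begin

text \<open>Component r of the m-th summand of a FUTC sweep only involves the entry U(r, n-m) and the
(n-m)-th component of the m-th vector, and vanishes unless r < n-m.  Hence component r of the
i-th vector of a sweep no longer depends on i once i \<ge> n-r, so every entry feeding component r
of the last vector z was already computed in the current sweep and agrees with the
corresponding entry of z itself.  Thus z = Uz + Lw + c, where w is the previous last vector,
and since I - U is unit upper triangular, hence invertible, z is one backward Gauss--Seidel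
step applied to w.\<close>

lemma index_Uc_mult_vec:
  assumes v: "v \<in> carrier_vec n" and r: "r < n" and j: "1 \<le> j" "j \<le> n"
  shows "(Uc n U j *\<^sub>v v) $ r = (if r < j - 1 then U $$ (r, j - 1) * v $ (j - 1) else 0)"
proof -
  have "(Uc n U j *\<^sub>v v) $ r =
      (\<Sum>s\<in>{0..<n}. (if s = j - 1 \<and> r < j - 1 then U $$ (r, s) else 0) * v $ s)"
    using v r unfolding Uc_def mult_mat_vec_def scalar_prod_def by (auto intro!: sum.cong)
  also have "\<dots> =
      (\<Sum>s\<in>{0..<n}. if s = j - 1 then (if r < j - 1 then U $$ (r, j - 1) * v $ (j - 1) else 0) else 0)"
    by (rule sum.cong) auto
  also have "\<dots> = (if r < j - 1 then U $$ (r, j - 1) * v $ (j - 1) else 0)"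
    using j by (subst sum.delta) auto
  finally show ?thesis .
qed

lemma Uc_mult_vec_funcset:
  "(\<lambda>m. Uc n U (f m) *\<^sub>v w m) \<in> M \<rightarrow> carrier_vec n"
  unfolding Uc_def by (intro funcsetI carrier_vecI) simp

lemma finsum_Uc_mult_vec_carrier:
  "finsum_vec TYPE(real) n (\<lambda>m. Uc n U (f m) *\<^sub>v w m) M \<in> carrier_vec n"
  by (rule finsum_vec_closed[OF Uc_mult_vec_funcset])

lemma index_finsum_Uc_mult_vec:
  assumes M: "M \<subseteq> {1..<n}" and w: "\<And>m. m \<in> M \<Longrightarrow> w m \<in> carrier_vec n" and r: "r < n"
  shows "finsum_vec TYPE(real) n (\<lambda>m. Uc n U (n + 1 - m) *\<^sub>v w m) M $ r
       = (\<Sum>m\<in>M. if r < n - m then U $$ (r, n - m) * w m $ (n - m) else 0)"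
proof -
  have "finite M" using M finite_subset by blast
  moreover have "(Uc n U (n + 1 - m) *\<^sub>v w m) $ r
      = (if r < n - m then U $$ (r, n - m) * w m $ (n - m) else 0)" if "m \<in> M" for m
    using subsetD[OF M that] w[OF that] r by (subst index_Uc_mult_vec) auto
  ultimately show ?thesis
    by (simp add: index_finsum_vec[OF _ r Uc_mult_vec_funcset])
qed

lemma index_strictly_upper_mult_vec:
  assumes U: "U \<in> carrier_mat n n" "strictly_upper n U" and z: "z \<in> carrier_vec n" and r: "r < n"
  shows "(U *\<^sub>v z) $ r = (\<Sum>s\<in>{r<..<n}. U $$ (r, s) * z $ s)"
proof -
  have "(U *\<^sub>v z) $ r = (\<Sum>s\<in>{0..<n}. U $$ (r, s) * z $ s)"
    using U z r unfolding mult_mat_vec_def scalar_prod_def by (auto intro!: sum.cong)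
  also have "\<dots> = (\<Sum>s\<in>{r<..<n}. U $$ (r, s) * z $ s)"
    using U(2) r unfolding strictly_upper_def by (intro sum.mono_neutral_right) auto
  finally show ?thesis .
qed

lemma det_one_minus_strictly_upper:
  assumes U: "U \<in> carrier_mat n n" "strictly_upper n U"
  shows "det (1\<^sub>m n - U) = 1"
proof -
  have "upper_triangular (1\<^sub>m n - U)"
    using U unfolding upper_triangular_def strictly_upper_def by auto
  then have "det (1\<^sub>m n - U) = prod_list (diag_mat (1\<^sub>m n - U))"
    using U by (intro det_upper_triangular) auto
  also have "diag_mat (1\<^sub>m n - U) = replicate n 1"
    using U unfolding diag_mat_def strictly_upper_def by (auto intro!: nth_equalityI)
  finally show ?thesis by simp
qed

lemma mat_inverse_mult_vec_cancel:
  fixes A :: "'a :: field mat"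
  assumes A: "A \<in> carrier_mat n n" and det: "det A \<noteq> 0" and z: "z \<in> carrier_vec n"
  shows "the (mat_inverse A) *\<^sub>v (A *\<^sub>v z) = z"
proof -
  have "A \<in> Units (ring_mat TYPE('a) n undefined)"
    using det_non_zero_imp_unit[OF A det] .
  then obtain B where B: "mat_inverse A = Some B"
    using mat_inverse(1)[OF A] by fastforce
  with mat_inverse(2)[OF A B] have "B * A = 1\<^sub>m n" "B \<in> carrier_mat n n" by auto
  then show ?thesis
    using A z B by (simp flip: assoc_mult_mat_vec)
qed

lemma one_minus_mult_vec_fixed_point:
  fixes U :: "'a :: comm_ring_1 mat"
  assumes U: "U \<in> carrier_mat n n" and z: "z \<in> carrier_vec n" and b: "b \<in> carrier_vec n"
    and fixed: "z = U *\<^sub>v z + b"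
  shows "(1\<^sub>m n - U) *\<^sub>v z = b"
proof -
  have "(1\<^sub>m n - U) *\<^sub>v z = z - U *\<^sub>v z"
    using minus_mult_distrib_mat_vec[OF one_carrier_mat U z] z by simp
  also have "\<dots> = b"
  proof (rule eq_vecI)
    fix r assume "r < dim_vec b"
    then show "(z - U *\<^sub>v z) $ r = b $ r"
      using U b arg_cong[OF fixed, of "\<lambda>v. v $ r"] by simp
  qed (use U b in simp)
  finally show ?thesis .
qed

lemma futc_sweep_last_fixed_point:
  assumes U: "U \<in> carrier_mat n n" "strictly_upper n U" and n: "1 \<le> n"
    and b: "b \<in> carrier_vec n"
    and v: "\<And>m. 1 \<le> m \<Longrightarrow> m < n \<Longrightarrow> v m \<in> carrier_vec n"
    and sweep: "\<And>i. 1 \<le> i \<Longrightarrow> i \<le> n \<Longrightarrow>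
       u i = finsum_vec TYPE(real) n (\<lambda>m. Uc n U (n + 1 - m) *\<^sub>v u m) {1..<i}
           + finsum_vec TYPE(real) n (\<lambda>m. Uc n U (n + 1 - m) *\<^sub>v v m) {i..<n} + b"
  shows "u n = U *\<^sub>v u n + b"
proof -
  have u: "u i \<in> carrier_vec n" if "1 \<le> i" "i \<le> n" for i
    using b by (subst sweep[OF that]) (rule carrier_vecI, simp)
  have stable: "u i $ r = (\<Sum>m\<in>{1..<n-r}. U $$ (r, n - m) * u m $ (n - m)) + b $ r"
    if i: "1 \<le> i" "i \<le> n" "n - r \<le> i" and r: "r < n" for i r
  proof -
    let ?new = "\<lambda>M. \<Sum>m\<in>M. if r < n - m then U $$ (r, n - m) * u m $ (n - m) else 0"
    have "u i $ r = ?new {1..<i}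
        + (\<Sum>m\<in>{i..<n}. if r < n - m then U $$ (r, n - m) * v m $ (n - m) else 0) + b $ r"
      using i r b index_finsum_Uc_mult_vec[of "{1..<i}" n u, OF _ u r]
        index_finsum_Uc_mult_vec[of "{i..<n}" n v, OF _ v r]
      by (subst sweep[OF i(1,2)]) (simp add: carrier_vecD[OF finsum_Uc_mult_vec_carrier])
    also have "(\<Sum>m\<in>{i..<n}. if r < n - m then U $$ (r, n - m) * v m $ (n - m) else 0) = 0"
      using i by (intro sum.neutral) auto
    also have "{1..<i} = {1..<n-r} \<union> {n-r..<i}"
      using i r by auto
    then have "?new {1..<i} = ?new {1..<n-r} + ?new {n-r..<i}"
      by (simp add: sum.union_disjoint)
    also have "?new {n-r..<i} = 0"
      by (intro sum.neutral) auto
    also have "?new {1..<n-r} = (\<Sum>m\<in>{1..<n-r}. U $$ (r, n - m) * u m $ (n - m))"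
      by (intro sum.cong) auto
    finally show ?thesis
      by simp
  qed
  show ?thesis
  proof (rule eq_vecI)
    fix r assume "r < dim_vec (U *\<^sub>v u n + b)"
    then have r: "r < n" using b by simp
    have "u n $ r = (\<Sum>m\<in>{1..<n-r}. U $$ (r, n - m) * u m $ (n - m)) + b $ r"
      using stable[OF n le_refl _ r] by simp
    also have "\<dots> = (\<Sum>m\<in>{1..<n-r}. U $$ (r, n - m) * u n $ (n - m)) + b $ r"
      using stable n by (intro arg_cong2[where f = "(+)"] sum.cong) auto
    also have "\<dots> = (\<Sum>s\<in>{r<..<n}. U $$ (r, s) * u n $ s) + b $ r"
      by (subst sum.reindex_bij_witness[of _ "\<lambda>s. n - s" "\<lambda>m. n - m"]) auto
    finally show "u n $ r = (U *\<^sub>v u n + b) $ r"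
      using r U b index_strictly_upper_mult_vec[OF U u[OF n le_refl] r] by simp
  qed (use U b u[OF n le_refl] in simp)
qed

theorem theorem6p2:
  fixes n :: nat and L U :: "real mat" and c :: "real vec"
    and y :: "nat \<Rightarrow> real vec" and x :: "nat \<Rightarrow> nat \<Rightarrow> real vec"
  assumes n: "n \<ge> 1"
    and L: "L \<in> carrier_mat n n" "strictly_lower n L"
    and U: "U \<in> carrier_mat n n" "strictly_upper n U"
    and c: "c \<in> carrier_vec n"
    and y0: "y 0 \<in> carrier_vec n"
    and ystep: "\<And>k. y (Suc k) = the (mat_inverse (1\<^sub>m n - U)) *\<^sub>v (L *\<^sub>v y k + c)"
    and x0: "\<And>i. 1 \<le> i \<Longrightarrow> i \<le> n - 1 \<Longrightarrow> x 0 i \<in> carrier_vec n"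
    and x0n: "x 0 n = y 0"
    and xstep: "\<And>k i. 1 \<le> i \<Longrightarrow> i \<le> n \<Longrightarrow>
       x (Suc k) i =
         finsum_vec TYPE(real) n (\<lambda>m. Uc n U (n + 1 - m) *\<^sub>v x (Suc k) m) {1..<i}
       + finsum_vec TYPE(real) n (\<lambda>m. Uc n U (n + 1 - m) *\<^sub>v x k m) {i..<n}
       + L *\<^sub>v x k n + c"
  shows "\<forall>k. x k n = y k"
proof -
  have x: "x k m \<in> carrier_vec n" if "1 \<le> m" "m \<le> n" for k m
  proof (cases k)
    case 0
    then show ?thesis
      using that x0 x0n y0 by (cases "m = n") auto
  next
    case (Suc k')
    show ?thesis
      unfolding Suc using c by (subst xstep[OF that]) (rule carrier_vecI, simp)
  qed
  have "x k n = y k" for k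
  proof (induction k)
    case (Suc k)
    let ?b = "L *\<^sub>v x k n + c"
    have b: "?b \<in> carrier_vec n"
      using L c x n by simp
    have "x (Suc k) n = U *\<^sub>v x (Suc k) n + ?b"
    proof (rule futc_sweep_last_fixed_point[OF U n b])
      fix i assume i: "1 \<le> i" "i \<le> n"
      show "x (Suc k) i =
          finsum_vec TYPE(real) n (\<lambda>m. Uc n U (n + 1 - m) *\<^sub>v x (Suc k) m) {1..<i}
        + finsum_vec TYPE(real) n (\<lambda>m. Uc n U (n + 1 - m) *\<^sub>v x k m) {i..<n} + ?b"
        by (subst xstep[OF i], rule assoc_add_vec)
          (rule add_carrier_vec finsum_Uc_mult_vec_carrier | use L c x n in simp)+
    qed (use x in simp)
    then have "(1\<^sub>m n - U) *\<^sub>v x (Suc k) n = ?b"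
      using U x n b by (intro one_minus_mult_vec_fixed_point) auto
    then have "y (Suc k) = the (mat_inverse (1\<^sub>m n - U)) *\<^sub>v ((1\<^sub>m n - U) *\<^sub>v x (Suc k) n)"
      using ystep Suc.IH by simp
    also have "\<dots> = x (Suc k) n"
      using U x n det_one_minus_strictly_upper[OF U] by (intro mat_inverse_mult_vec_cancel) auto
    finally show ?case
      by simp
  qed (rule x0n)
  then show ?thesis
    by blast
qed

end
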